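(* Let $\theta,\phi,\rho\in\mathrm{Mat}_{s\times s}(\bar k[\sigma])$ satisfy $(\partial\theta-T\mathbf 1_s)^s=0$, $\theta\phi=\phi\rho$, $(\partial\rho-T\mathbf 1_s)^s=0$, and assume the map $x\mapsto x\phi$ on $\mathrm{Mat}_{1\times s}(\bar k[\sigma])$ is injective. Then $\det\partial\phi\ne0$.
   Context: $\bar k$ is the algebraic closure of $k=\mathbb F_q(T)$. $\bar k[\sigma]$ is the noncommutative polynomial ring in $\sigma$ with $\sigma x=x^{q^{-1}}\sigma$ for $x\in\bar k$. For a matrix $\phi=\sum_i a_{(i)}\sigma^i$ with entries in $\bar k[\sigma]$ (the $a_{(i)}$ matrices over $\bar k$), $\partial\phi:=a_{(0)}$. $\mathbf 1_s$ is the $s\times s$ identity matrix. *)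

theory Defs
  imports "HOL-Algebra.Algebraic_Closure_Type" "HOL-Computational_Algebra.Fraction_Field"
    "Jordan_Normal_Form.Determinant"
begin

(* kbar = algebraic closure of k = F_q(T), where F_q is the finite field 'f, q = CARD('f) *)
type_synonym 'f kbar = "'f poly fract alg_closure"

definition Tk :: "'f::{finite,field} kbar" where
  "Tk = to_ac (Fract [:0, 1:] 1)"

definition frob_inv :: "'f::{finite,field} kbar \<Rightarrow> 'f kbar" where
  "frob_inv x = (THE y. y ^ card (UNIV :: 'f set) = x)"

(* An n x m matrix over kbar[sigma] is represented by its coefficient matrices:
   phi = sum_i A i * sigma^i, with A i an n x m matrix over kbar, finitely many nonzero. *)
type_synonym 'f smat = "nat \<Rightarrow> 'f kbar mat"

definition is_smat :: "nat \<Rightarrow> nat \<Rightarrow> 'f::{finite,field} smat \<Rightarrow> bool" where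
  "is_smat n m A \<longleftrightarrow> (\<forall>i. A i \<in> carrier_mat n m) \<and> (\<exists>N. \<forall>i\<ge>N. A i = 0\<^sub>m n m)"

(* product of an n x k and a k x m matrix over kbar[sigma], using sigma x = x^(q^-1) sigma:
   (sum_i A_i sigma^i)(sum_j B_j sigma^j) = sum_{i,j} A_i B_j^(q^-i) sigma^(i+j) *)
definition sprod :: "nat \<Rightarrow> nat \<Rightarrow> nat \<Rightarrow> 'f::{finite,field} smat \<Rightarrow> 'f smat \<Rightarrow> 'f smat" where
  "sprod n k m A B = (\<lambda>d. mat n m (\<lambda>(r, c).
      \<Sum>i\<le>d. \<Sum>l<k. A i $$ (r, l) * (frob_inv ^^ i) (B (d - i) $$ (l, c))))"

definition sdel :: "'f::{finite,field} smat \<Rightarrow> 'f kbar mat" where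
  "sdel A = A 0"

end

theory Submission
  imports Defs "HOL-Library.Function_Algebras" "HOL-Library.Cardinality"
begin

(* Suppose det (\<partial>\<phi>) = 0 and let N = Mat_{1\<times>s}(kbar[\<sigma>]) \<phi>. Since \<theta>\<phi> = \<phi>\<rho>, N is stable under
   right multiplication by \<rho>, and since \<phi> is injective, any e s + 1 rows are linearly dependent over
   kbar modulo N (e bounds the degree of \<phi>). A left kernel vector of \<partial>\<phi>, moved along the nilpotent
   \<partial>\<theta> - T, yields a row c \<notin> N with c (\<rho> - T^q) \<in> N. Multiplying by \<sigma> turns \<rho> - m^q into
   \<rho> - m, and together with the nilpotency of \<partial>\<rho> - T this turns an eigenvector of \<rho> modulo N for
   an eigenvalue m \<noteq> T into one for m^q. So \<rho> has eigenvectors modulo N for the infinitely many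
   distinct eigenvalues T^(q^n), which are independent modulo N: a contradiction. *)

section \<open>Finite sums and linear algebra over a field\<close>

lemma sum_fun_apply: "(\<Sum>k\<in>K. F k) x = (\<Sum>k\<in>K. F k x)"
  by (induction K rule: infinite_finite_induct) simp_all

lemma sum_atMost_triangle_swap:
  "(\<Sum>i\<le>(d::nat). \<Sum>j\<le>i. g j i) = (\<Sum>j\<le>d. \<Sum>k\<le>d - j. g j (j + k))"
proof -
  have "(\<Sum>i\<le>d. \<Sum>j\<le>i. g j i) = (\<Sum>(j, k)\<in>{(j, k). j + k \<le> d}. g j (j + k))"
    by (simp add: sum.triangle_reindex_eq)
  also have "{(j, k). j + k \<le> d} = Sigma {..d} (\<lambda>j. {..d - j})"
    by auto
  finally show ?thesis
    by (simp add: sum.Sigma)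
qed

lemma sum_mult_sum_swap:
  "(\<Sum>l\<in>L. (\<Sum>j\<in>J. \<Sum>l'\<in>L'. x j l' l) * y l)
    = (\<Sum>j\<in>J. \<Sum>l'\<in>L'. \<Sum>l\<in>L. x j l' l * (y l :: 'a::comm_semiring_1))"
proof -
  have "(\<Sum>l\<in>L. (\<Sum>j\<in>J. \<Sum>l'\<in>L'. x j l' l) * y l)
      = (\<Sum>l\<in>L. \<Sum>j\<in>J. \<Sum>l'\<in>L'. x j l' l * y l)"
    by (simp only: sum_distrib_right)
  also have "\<dots> = (\<Sum>j\<in>J. \<Sum>l\<in>L. \<Sum>l'\<in>L'. x j l' l * y l)"
    by (rule sum.swap)
  also have "\<dots> = (\<Sum>j\<in>J. \<Sum>l'\<in>L'. \<Sum>l\<in>L. x j l' l * y l)"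
    by (rule sum.cong[OF refl], rule sum.swap)
  finally show ?thesis .
qed

lemma sum_atMost_add_split: "(\<Sum>k\<le>m + (n::nat). f k) = (\<Sum>k<m. f k) + (\<Sum>l\<le>n. f (l + m))"
  by (induction n) (simp_all add: atMost_Suc lessThan_Suc_atMost[symmetric] add_ac)

lemma sum_vec_mult_mat:
  assumes "M \<in> carrier_mat s s" and "B \<in> carrier_mat s s" and "c < s"
  shows "(\<Sum>l<s. (\<Sum>m<s. x m * M $$ (m, l)) * B $$ (l, c)) = (\<Sum>m<s. x m * (M * B) $$ (m, c))"
proof -
  have "(\<Sum>l<s. (\<Sum>m<s. x m * M $$ (m, l)) * B $$ (l, c))
      = (\<Sum>l<s. \<Sum>m<s. x m * (M $$ (m, l) * B $$ (l, c)))"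
    by (simp only: sum_distrib_right mult.assoc)
  also have "\<dots> = (\<Sum>m<s. \<Sum>l<s. x m * (M $$ (m, l) * B $$ (l, c)))"
    by (rule sum.swap)
  also have "\<dots> = (\<Sum>m<s. x m * (M * B) $$ (m, c))"
    using assms by (simp add: sum_distrib_left scalar_prod_def atLeast0LessThan)
  finally show ?thesis .
qed

lemma exists_nontrivial_linear_relation:
  fixes w :: "nat \<Rightarrow> nat \<Rightarrow> 'a::field"
  obtains a where "\<exists>k\<le>n. a k \<noteq> 0" and "\<And>i. i < n \<Longrightarrow> (\<Sum>k\<le>n. a k * w k i) = 0"
proof -
  define A where "A = mat\<^sub>r (Suc n) (Suc n) (\<lambda>i. if i = n then 0\<^sub>v (Suc n) else vec (Suc n) (\<lambda>k. w k i))"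
  have A: "A \<in> carrier_mat (Suc n) (Suc n)"
    by (simp add: A_def)
  have "det A = 0"
    unfolding A_def by (rule det_row_0) auto
  then obtain v where v: "v \<in> carrier_vec (Suc n)" "v \<noteq> 0\<^sub>v (Suc n)" "A *\<^sub>v v = 0\<^sub>v (Suc n)"
    using det_0_iff_vec_prod_zero[OF A] by blast
  show ?thesis
  proof
    show "\<exists>k\<le>n. v $ k \<noteq> 0"
      using v(1,2) by (auto simp: vec_eq_iff less_Suc_eq_le)
    show "(\<Sum>k\<le>n. v $ k * w k i) = 0" if "i < n" for i
      using arg_cong[OF v(3), of "\<lambda>x :: 'a vec. x $ i"] that v(1)
      by (simp add: A_def scalar_prod_def atLeast0LessThan lessThan_Suc_atMost mult.commute)
  qed
qed

lemma det_eq_0_left_kernel: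
  fixes A :: "'a::field mat"
  assumes A: "A \<in> carrier_mat s s" and "det A = 0"
  obtains v where "\<exists>l<s. v l \<noteq> 0" and "\<And>c. c < s \<Longrightarrow> (\<Sum>l<s. v l * A $$ (l, c)) = 0"
proof -
  have At: "transpose_mat A \<in> carrier_mat s s"
    using A by simp
  have "det (transpose_mat A) = 0"
    using assms det_transpose[OF A] by simp
  then obtain w where w: "w \<in> carrier_vec s" "w \<noteq> 0\<^sub>v s" "transpose_mat A *\<^sub>v w = 0\<^sub>v s"
    using det_0_iff_vec_prod_zero[OF At] by blast
  show ?thesis
  proof
    show "\<exists>l<s. w $ l \<noteq> 0"
      using w(1,2) by (auto simp: vec_eq_iff)
    show "(\<Sum>l<s. w $ l * A $$ (l, c)) = 0" if "c < s" for c
      using arg_cong[OF w(3), of "\<lambda>x :: 'a vec. x $ c"] that A w(1)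
      by (simp add: scalar_prod_def atLeast0LessThan mult.commute)
  qed
qed

context vector_space
begin

lemma shift_funpow_modulo_subspace:
  assumes N: "subspace N" and L: "Vector_Spaces.linear scale scale L"
    and invariant: "\<And>x. x \<in> N \<Longrightarrow> L x \<in> N" and eigen: "L v - \<mu> *s v \<in> N"
  shows "((\<lambda>x. L x - a *s x) ^^ n) v - (\<mu> - a) ^ n *s v \<in> N"
proof (induction n)
  case 0
  then show ?case
    using subspace_0[OF N] by simp
next
  case (Suc n)
  interpret L: Vector_Spaces.linear scale scale L by fact
  define x where "x = ((\<lambda>x. L x - a *s x) ^^ n) v - (\<mu> - a) ^ n *s v"
  have "((\<lambda>x. L x - a *s x) ^^ Suc n) v - (\<mu> - a) ^ Suc n *s v
      = (L x - a *s x) + (\<mu> - a) ^ n *s (L v - \<mu> *s v)"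
    by (simp add: x_def L.diff L.scale algebra_simps)
  moreover have "L x - a *s x \<in> N"
    using Suc N by (simp add: x_def invariant subspace_diff subspace_scale)
  ultimately show ?case
    using N eigen by (simp add: subspace_add subspace_scale)
qed

text \<open>Applying \<open>L - \<mu>\<^sub>m\<close> to a relation kills its last term and multiplies the others by the
  nonzero \<open>\<mu>\<^sub>i - \<mu>\<^sub>m\<close>.\<close>
lemma eigenvectors_modulo_subspace_independent:
  fixes v :: "nat \<Rightarrow> 'b" and \<mu> :: "nat \<Rightarrow> 'a"
  assumes N: "subspace N" and L: "Vector_Spaces.linear scale scale L"
    and invariant: "\<And>x. x \<in> N \<Longrightarrow> L x \<in> N"
    and notin: "\<And>i. v i \<notin> N" and eigen: "\<And>i. L (v i) - \<mu> i *s v i \<in> N" and "inj \<mu>"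
    and "(\<Sum>i<m. a i *s v i) \<in> N"
  shows "\<forall>i<m. a i = 0"
  using assms(7)
proof (induction m arbitrary: a)
  case (Suc m)
  interpret L: Vector_Spaces.linear scale scale L by fact
  define b where "b i = a i * (\<mu> i - \<mu> m)" for i
  have "L (\<Sum>i<Suc m. a i *s v i) - \<mu> m *s (\<Sum>i<Suc m. a i *s v i)
      = (\<Sum>i<Suc m. a i *s (L (v i) - \<mu> m *s v i))"
    by (simp add: L.sum L.scale scale_sum_right scale_right_diff_distrib sum_subtractf mult.commute
        del: sum.lessThan_Suc)
  also have "\<dots> = (\<Sum>i<Suc m. a i *s (L (v i) - \<mu> i *s v i) + b i *s v i)"
    by (intro sum.cong refl) (simp add: b_def algebra_simps)
  also have "\<dots> = (\<Sum>i<Suc m. a i *s (L (v i) - \<mu> i *s v i)) + (\<Sum>i<m. b i *s v i)"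
    by (simp add: sum.distrib b_def)
  finally have "(\<Sum>i<m. b i *s v i) = (L (\<Sum>i<Suc m. a i *s v i) - \<mu> m *s (\<Sum>i<Suc m. a i *s v i))
      - (\<Sum>i<Suc m. a i *s (L (v i) - \<mu> i *s v i))"
    by (simp add: algebra_simps)
  also have "\<dots> \<in> N"
  proof (rule subspace_diff[OF N])
    show "L (\<Sum>i<Suc m. a i *s v i) - \<mu> m *s (\<Sum>i<Suc m. a i *s v i) \<in> N"
      using Suc.prems by (intro subspace_diff[OF N] invariant subspace_scale[OF N])
    show "(\<Sum>i<Suc m. a i *s (L (v i) - \<mu> i *s v i)) \<in> N"
      by (rule subspace_sum[OF N], rule subspace_scale[OF N eigen])
  qed
  finally have "(\<Sum>i<m. b i *s v i) \<in> N" .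
  then have "\<forall>i<m. b i = 0"
    by (rule Suc.IH)
  then have a_less: "\<forall>i<m. a i = 0"
    using \<open>inj \<mu>\<close> by (auto simp: b_def inj_eq)
  then have "a m *s v m \<in> N"
    using Suc.prems by simp
  then have "inverse (a m) *s (a m *s v m) \<in> N"
    by (rule subspace_scale[OF N])
  then have "a m = 0"
    using notin[of m] by (cases "a m = 0") auto
  with a_less show ?case
    using less_Suc_eq by blast
qed simp

end

section \<open>The inverse Frobenius map of kbar\<close>

lemma power_card_eq_self:
  fixes x :: "'a::{finite,field}"
  shows "x ^ CARD('a) = x"
proof (cases "x = 0")
  case True
  then show ?thesis
    using finite_UNIV_card_ge_0[where 'a='a] by simp
next
  case False
  let ?U = "UNIV - {0::'a}"
  have "(\<Prod>y\<in>?U. x * y) = (\<Prod>y\<in>?U. y)"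
    by (rule prod.reindex_bij_witness[of _ "\<lambda>y. y / x" "\<lambda>y. x * y"]) (use False in auto)
  moreover have "(\<Prod>y\<in>?U. x * y) = x ^ card ?U * (\<Prod>y\<in>?U. y)"
    by (simp add: prod.distrib)
  moreover have "(\<Prod>y\<in>?U. y) \<noteq> 0"
    by simp
  moreover have "card ?U = CARD('a) - 1"
    by (simp add: card_Diff_singleton)
  ultimately have "x ^ (CARD('a) - 1) = 1"
    by simp
  moreover have "x ^ CARD('a) = x ^ (CARD('a) - 1) * x"
    by (intro power_minus_mult[symmetric]) simp
  ultimately show ?thesis
    by simp
qed

lemma card_field_ge_2: "CARD('a::{finite,field}) \<ge> 2"
  using card_mono[of UNIV "{0, 1::'a}"] by simp

text \<open>The polynomial \<open>(X + 1)^q - X^q - 1\<close> vanishes on the whole field but has degree \<open>< q\<close>.\<close>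

lemma of_nat_card_choose_eq_0:
  assumes "0 < k" and "k < CARD('a::{finite,field})"
  shows "of_nat (CARD('a) choose k) = (0::'a)"
proof -
  define q where "q = CARD('a)"
  define p :: "'a poly" where "p = (\<Sum>j\<in>{1..<q}. monom (of_nat (q choose j)) j)"
  have coeff_p: "coeff p n = (if 0 < n \<and> n < q then of_nat (q choose n) else 0)" for n
    unfolding p_def coeff_sum coeff_monom by (auto simp: sum.delta')
  have "poly p x = 0" for x
  proof -
    have "{..q} = insert 0 (insert q {1..<q})"
      using card_field_ge_2[where 'a='a] by (auto simp: q_def)
    then have "(x + 1) ^ q = (\<Sum>j\<in>insert 0 (insert q {1..<q}). of_nat (q choose j) * x ^ j)"
      using binomial_ring[of x 1 q] by simp
    also have "\<dots> = 1 + (x ^ q + poly p x)"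
      using card_field_ge_2[where 'a='a] by (simp add: p_def poly_sum poly_monom q_def)
    finally show ?thesis
      by (simp add: power_card_eq_self q_def)
  qed
  moreover have "degree p < q"
  proof -
    have "degree p \<le> q - 1"
      by (rule degree_le) (auto simp: coeff_p)
    then show ?thesis
      using card_field_ge_2[where 'a='a] by (simp add: q_def)
  qed
  ultimately have "p = 0"
    using card_poly_roots_bound[of p] by (fastforce simp: q_def)
  then show ?thesis
    using coeff_p[of k] assms by (simp add: q_def)
qed

lemma of_nat_kbar_eq_0:
  assumes "of_nat n = (0::'f::{finite,field})"
  shows "of_nat n = (0::'f kbar)"
proof -
  have "(of_nat n :: 'f kbar) = to_ac (of_nat n)"
    by simp
  also have "(of_nat n :: 'f poly fract) = Fract [:of_nat n:] 1"
    by (simp add: of_nat_fract of_nat_poly)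
  finally show ?thesis
    using assms by (simp add: Zero_fract_def[symmetric])
qed

lemma power_add_eq_if_binomials_vanish:
  fixes x y :: "'a::comm_semiring_1"
  assumes "0 < q" and "\<And>k. 0 < k \<Longrightarrow> k < q \<Longrightarrow> of_nat (q choose k) = (0::'a)"
  shows "(x + y) ^ q = x ^ q + y ^ q"
proof -
  have "(x + y) ^ q = (\<Sum>k\<in>{0, q}. of_nat (q choose k) * x ^ k * y ^ (q - k))"
    unfolding binomial_ring by (rule sum.mono_neutral_right) (auto simp: assms)
  then show ?thesis
    using assms(1) by (simp add: add.commute)
qed

lemma kbar_power_card_add:
  fixes x y :: "'f::{finite,field} kbar"
  shows "(x + y) ^ CARD('f) = x ^ CARD('f) + y ^ CARD('f)"
  using card_field_ge_2[where 'a='f]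
  by (intro power_add_eq_if_binomials_vanish) (simp_all add: of_nat_kbar_eq_0 of_nat_card_choose_eq_0)

lemma kbar_power_card_inj:
  fixes x y :: "'f::{finite,field} kbar"
  assumes "x ^ CARD('f) = y ^ CARD('f)"
  shows "x = y"
proof -
  have "(x - y) ^ CARD('f) = 0"
    using assms kbar_power_card_add[of "x - y" y] by simp
  then show ?thesis
    by simp
qed

lemma kbar_power_card_surj: "\<exists>y::'f::{finite,field} kbar. y ^ CARD('f) = x"
proof -
  define c where "c k = (if k = CARD('f) then 1 else if k = 0 then - x else 0)" for k
  obtain y where "(\<Sum>k\<le>CARD('f). c k * y ^ k) = 0"
    using alg_closed[of "CARD('f)" c] card_field_ge_2[where 'a='f] by (auto simp: c_def)
  moreover have "(\<Sum>k\<le>CARD('f). c k * y ^ k) = (\<Sum>k\<in>{0, CARD('f)}. c k * y ^ k)"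
    by (rule sum.mono_neutral_right) (auto simp: c_def)
  ultimately show ?thesis
    using card_field_ge_2[where 'a='f] by (auto simp: c_def)
qed

lemma power_card_frob_inv [simp]: "frob_inv x ^ CARD('f) = (x::'f::{finite,field} kbar)"
proof -
  have "\<exists>!y::'f kbar. y ^ CARD('f) = x"
    using kbar_power_card_surj kbar_power_card_inj by blast
  then show ?thesis
    unfolding frob_inv_def by (rule theI')
qed

lemma frob_inv_power_card [simp]: "frob_inv (x ^ CARD('f)) = (x::'f::{finite,field} kbar)"
  by (rule kbar_power_card_inj) simp

lemma frob_inv_inject [simp]: "frob_inv x = frob_inv y \<longleftrightarrow> (x::'f::{finite,field} kbar) = y"
  using power_card_frob_inv by metis

interpretation frob_inv: field_hom "frob_inv :: 'f::{finite,field} kbar \<Rightarrow> 'f kbar"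
proof unfold_locales
  show "frob_inv (x + y) = frob_inv x + frob_inv y" for x y :: "'f kbar"
    by (rule kbar_power_card_inj) (simp only: kbar_power_card_add power_card_frob_inv)
  show "frob_inv (x * y) = frob_inv x * frob_inv y" for x y :: "'f kbar"
    by (rule kbar_power_card_inj) (simp only: power_mult_distrib power_card_frob_inv)
  show "frob_inv 0 = (0 :: 'f kbar)"
    using frob_inv_power_card[of "0 :: 'f kbar"] card_field_ge_2[where 'a='f] by (simp add: power_0_left)
  show "frob_inv 1 = (1 :: 'f kbar)"
    using frob_inv_power_card[of "1 :: 'f kbar"] by simp
qed

lemma field_hom_funpow:
  fixes h :: "'a::field \<Rightarrow> 'a"
  assumes "field_hom h"
  shows "field_hom (h ^^ n)"
proof (induction n)
  case 0
  show ?case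
    by unfold_locales simp_all
next
  case (Suc n)
  interpret h: field_hom h by fact
  interpret hn: field_hom "h ^^ n" by fact
  show ?case
    by unfold_locales (simp_all add: h.hom_add h.hom_mult hn.hom_add hn.hom_mult)
qed

lemma frob_inv_funpow_hom:
  fixes x y :: "'f::{finite,field} kbar"
  shows "(frob_inv ^^ n) (0 :: 'f kbar) = 0"
    and "(frob_inv ^^ n) (x * y) = (frob_inv ^^ n) x * (frob_inv ^^ n) y"
    and "(frob_inv ^^ n) (sum g A :: 'f kbar) = (\<Sum>a\<in>A. (frob_inv ^^ n) (g a))"
proof -
  interpret field_hom "frob_inv ^^ n :: 'f kbar \<Rightarrow> 'f kbar"
    by (rule field_hom_funpow) (rule frob_inv.field_hom_axioms)
  show "(frob_inv ^^ n) (0 :: 'f kbar) = 0"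
    by (rule hom_zero)
  show "(frob_inv ^^ n) (x * y) = (frob_inv ^^ n) x * (frob_inv ^^ n) y"
    by (rule hom_mult)
  show "(frob_inv ^^ n) (sum g A :: 'f kbar) = (\<Sum>a\<in>A. (frob_inv ^^ n) (g a))"
    by (rule hom_sum)
qed

lemma Tk_power_eq_iff: "(Tk :: 'f::{finite,field} kbar) ^ a = Tk ^ b \<longleftrightarrow> a = b"
proof
  have Fract_power: "Fract x 1 ^ n = Fract (x ^ n) 1" for x :: "'f poly" and n
    by (induction n) (simp_all add: One_fract_def)
  assume "(Tk :: 'f kbar) ^ a = Tk ^ b"
  then have "([:0, 1:] ^ a :: 'f poly) = [:0, 1:] ^ b"
    by (simp add: Tk_def Fract_power eq_fract flip: to_ac_power)
  then have "degree ([:0, 1:] ^ a :: 'f poly) = degree ([:0, 1:] ^ b :: 'f poly)"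
    by simp
  then show "a = b"
    by (simp add: degree_power_eq)
qed simp

lemma inj_Tk_power_card_power: "inj (\<lambda>n. (Tk :: 'f::{finite,field} kbar) ^ CARD('f) ^ Suc n)"
  using card_field_ge_2[where 'a='f] by (auto intro!: injI simp: Tk_power_eq_iff power_inject_exp)

lemma Tk_power_card_power_neq_Tk: "(Tk :: 'f::{finite,field} kbar) ^ CARD('f) ^ Suc n \<noteq> Tk"
  using Tk_power_eq_iff[of "CARD('f) ^ Suc n" 1] card_field_ge_2[where 'a='f] by simp

section \<open>Rows over kbar[\<sigma>]\<close>

text \<open>A row of \<open>Mat\<^bsub>1\<times>s\<^esub>(kbar[\<sigma>])\<close> is stored by its coefficients: \<open>f d c\<close> is the
  coefficient of \<open>\<sigma>\<^sup>d\<close> in the entry \<open>c\<close>. Rows are added pointwise, and \<open>srow_smult a f = a f\<close>,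
  \<open>srow_sigma f = \<sigma> f\<close>, \<open>srow_mult s A f = f A\<close>, \<open>srow_shift s A a f = f (A - a)\<close>.\<close>

type_synonym 'f srow = "nat \<Rightarrow> nat \<Rightarrow> 'f kbar"

definition is_srow :: "nat \<Rightarrow> 'f::{finite,field} srow \<Rightarrow> bool" where
  "is_srow s f \<longleftrightarrow> (\<forall>d c. s \<le> c \<longrightarrow> f d c = 0) \<and> (\<exists>N. \<forall>d\<ge>N. \<forall>c. f d c = 0)"

definition srow_smult :: "'f::{finite,field} kbar \<Rightarrow> 'f srow \<Rightarrow> 'f srow" where
  "srow_smult a f = (\<lambda>d c. a * f d c)"

definition srow_sigma :: "'f::{finite,field} srow \<Rightarrow> 'f srow" where
  "srow_sigma f = (\<lambda>d c. if d = 0 then 0 else frob_inv (f (d - 1) c))"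

definition srow_mult :: "nat \<Rightarrow> 'f::{finite,field} smat \<Rightarrow> 'f srow \<Rightarrow> 'f srow" where
  "srow_mult s A f = (\<lambda>d c. if c < s
     then \<Sum>i\<le>d. \<Sum>l<s. f i l * (frob_inv ^^ i) (A (d - i) $$ (l, c)) else 0)"

definition srow_shift :: "nat \<Rightarrow> 'f::{finite,field} smat \<Rightarrow> 'f kbar \<Rightarrow> 'f srow \<Rightarrow> 'f srow" where
  "srow_shift s A a f = srow_mult s A f - srow_smult a f"

lemma srow_smult_apply [simp]: "srow_smult a f d c = a * f d c"
  by (simp add: srow_smult_def)

interpretation srow: vector_space "srow_smult :: 'f::{finite,field} kbar \<Rightarrow> 'f srow \<Rightarrow> 'f srow"
  by unfold_locales (simp_all add: srow_smult_def plus_fun_def distrib_left distrib_right mult.assoc)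

lemma subspace_srows: "srow.subspace {f. is_srow s f}"
proof (rule srow.subspaceI; unfold mem_Collect_eq)
  show "is_srow s 0"
    by (simp add: is_srow_def)
next
  fix f g :: "'f::{finite,field} srow"
  assume f: "is_srow s f" and g: "is_srow s g"
  obtain N M where "\<forall>d\<ge>N. \<forall>c. f d c = 0" and "\<forall>d\<ge>M. \<forall>c. g d c = 0"
    using f g by (auto simp: is_srow_def)
  then show "is_srow s (f + g)"
    using f g by (auto simp: is_srow_def intro!: exI[of _ "max N M"])
next
  fix f :: "'f::{finite,field} srow" and a
  assume f: "is_srow s f"
  then obtain N where "\<forall>d\<ge>N. \<forall>c. f d c = 0"
    by (auto simp: is_srow_def)
  then show "is_srow s (srow_smult a f)"
    using f by (auto simp: is_srow_def intro!: exI[of _ N])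
qed

lemma is_srow_sigma:
  assumes "is_srow s f"
  shows "is_srow s (srow_sigma f)"
proof -
  obtain N where "\<forall>d\<ge>N. \<forall>c. f d c = 0"
    using assms by (auto simp: is_srow_def)
  then have "\<forall>d\<ge>Suc N. \<forall>c. srow_sigma f d c = 0"
    by (simp add: srow_sigma_def frob_inv.hom_zero)
  then show ?thesis
    using assms by (auto simp: is_srow_def srow_sigma_def frob_inv.hom_zero)
qed

lemma srow_sigma_0 [simp]: "srow_sigma f 0 = 0"
  by (simp add: srow_sigma_def fun_eq_iff)

lemma srow_sigma_diff: "srow_sigma (f - g) = srow_sigma f - srow_sigma g"
  by (simp add: srow_sigma_def fun_eq_iff frob_inv.hom_minus)

lemma srow_sigma_smult: "srow_sigma (srow_smult a f) = srow_smult (frob_inv a) (srow_sigma f)"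
  by (simp add: srow_sigma_def fun_eq_iff frob_inv.hom_mult)

lemma srow_sigma_inject [simp]: "srow_sigma f = srow_sigma g \<longleftrightarrow> f = g"
proof
  assume "srow_sigma f = srow_sigma g"
  then have "srow_sigma f (Suc d) c = srow_sigma g (Suc d) c" for d c
    by simp
  then show "f = g"
    by (simp add: srow_sigma_def fun_eq_iff)
qed simp

lemma srow_sigma_surj:
  fixes f :: "'f::{finite,field} srow"
  assumes "is_srow s f" and "f 0 = 0"
  obtains g where "is_srow s g" and "f = srow_sigma g"
proof
  define g where "g = (\<lambda>d c. f (Suc d) c ^ CARD('f))"
  have "0 < CARD('f)"
    using card_field_ge_2[where 'a='f] by simp
  obtain N where "\<forall>d\<ge>N. \<forall>c. f d c = 0"
    using assms(1) by (auto simp: is_srow_def)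
  then show "is_srow s g"
    using assms(1) \<open>0 < CARD('f)\<close> by (auto simp: is_srow_def g_def intro!: exI[of _ N])
  show "f = srow_sigma g"
    using assms(2) by (auto simp: srow_sigma_def g_def fun_eq_iff gr0_conv_Suc)
qed

lemma srow_mult_eq_0_above:
  assumes "\<forall>d\<ge>N. \<forall>c. f d c = 0" and "\<forall>i\<ge>E. A i = 0\<^sub>m s s" and "N + E \<le> d"
  shows "srow_mult s A f d c = 0"
proof -
  have "f i l * (frob_inv ^^ i) (A (d - i) $$ (l, c)) = 0" if "l < s" "c < s" for i l
  proof (cases "N \<le> i")
    case False
    then have "A (d - i) = 0\<^sub>m s s"
      using assms(2,3) by simp
    then show ?thesis
      using that by (simp add: frob_inv_funpow_hom)
  qed (use assms(1) in simp)
  then show ?thesis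
    by (auto simp: srow_mult_def intro!: sum.neutral)
qed

lemma is_srow_srow_mult:
  assumes "is_srow s f" and "is_smat s s A"
  shows "is_srow s (srow_mult s A f)"
proof -
  obtain N where "\<forall>d\<ge>N. \<forall>c. f d c = 0"
    using assms(1) by (auto simp: is_srow_def)
  moreover obtain E where "\<forall>i\<ge>E. A i = 0\<^sub>m s s"
    using assms(2) by (auto simp: is_smat_def)
  ultimately have "\<forall>d\<ge>N + E. \<forall>c. srow_mult s A f d c = 0"
    using srow_mult_eq_0_above by blast
  then show ?thesis
    unfolding is_srow_def by (intro conjI exI[of _ "N + E"]) (simp_all add: srow_mult_def)
qed

lemma is_srow_srow_shift:
  assumes "is_srow s f" and "is_smat s s A"
  shows "is_srow s (srow_shift s A a f)"
  unfolding srow_shift_def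
  using srow.subspace_diff[OF subspace_srows] srow.subspace_scale[OF subspace_srows]
    is_srow_srow_mult[OF assms] assms(1)
  by blast

lemma is_srow_srow_shift_funpow:
  assumes "is_srow s f" and "is_smat s s A"
  shows "is_srow s ((srow_shift s A a ^^ n) f)"
  by (induction n) (simp_all add: assms is_srow_srow_shift)

lemma srow_mult_add: "srow_mult s A (f + g) = srow_mult s A f + srow_mult s A g"
  by (simp add: srow_mult_def fun_eq_iff distrib_right sum.distrib)

lemma srow_mult_smult: "srow_mult s A (srow_smult a f) = srow_smult a (srow_mult s A f)"
  by (simp add: srow_mult_def fun_eq_iff sum_distrib_left mult.assoc)

lemma linear_srow_mult: "Vector_Spaces.linear srow_smult srow_smult (srow_mult s A)"
  by (simp add: Vector_Spaces.linear_iff srow.vector_space_axioms srow_mult_add srow_mult_smult)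

interpretation srow_mult: Vector_Spaces.linear srow_smult srow_smult "srow_mult s A"
  by (rule linear_srow_mult)

lemma srow_mult_sigma: "srow_mult s A (srow_sigma f) = srow_sigma (srow_mult s A f)"
proof (intro ext)
  fix d c
  show "srow_mult s A (srow_sigma f) d c = srow_sigma (srow_mult s A f) d c"
  proof (cases d)
    case 0
    then show ?thesis
      by (simp add: srow_mult_def srow_sigma_def)
  next
    case (Suc d')
    then show ?thesis
      by (simp add: srow_mult_def srow_sigma_def sum.atMost_Suc_shift frob_inv.hom_sum
          frob_inv.hom_mult del: sum.atMost_Suc)
  qed
qed

lemma srow_mult_apply:
  "c < s \<Longrightarrow> srow_mult s A f d c = (\<Sum>i\<le>d. \<Sum>l<s. f i l * (frob_inv ^^ i) (A (d - i) $$ (l, c)))"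
  by (simp add: srow_mult_def)

lemma srow_mult_const:
  "srow_mult s A f 0 c = (if c < s then \<Sum>l<s. f 0 l * A 0 $$ (l, c) else 0)"
  by (simp add: srow_mult_def)

lemma srow_mult_sprod: "srow_mult s B (srow_mult s A f) = srow_mult s (sprod s s s A B) f"
proof -
  let ?F = "\<lambda>j. frob_inv ^^ j"
  have "srow_mult s B (srow_mult s A f) d c = srow_mult s (sprod s s s A B) f d c"
    if "c < s" for d c
  proof -
    have "srow_mult s B (srow_mult s A f) d c
        = (\<Sum>i\<le>d. \<Sum>l<s. (\<Sum>j\<le>i. \<Sum>l'<s. f j l' * ?F j (A (i - j) $$ (l', l))) * ?F i (B (d - i) $$ (l, c)))"
      using that by (simp add: srow_mult_apply)
    also have "\<dots> = (\<Sum>i\<le>d. \<Sum>j\<le>i. \<Sum>l'<s. \<Sum>l<s.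
        f j l' * ?F j (A (i - j) $$ (l', l)) * ?F i (B (d - i) $$ (l, c)))"
      by (rule sum.cong[OF refl], rule sum_mult_sum_swap)
    also have "\<dots> = (\<Sum>j\<le>d. \<Sum>k\<le>d - j. \<Sum>l'<s. \<Sum>l<s.
        f j l' * ?F j (A k $$ (l', l)) * ?F (j + k) (B (d - j - k) $$ (l, c)))"
      by (simp only: sum_atMost_triangle_swap add_diff_cancel_left' diff_diff_eq)
    also have "\<dots> = (\<Sum>j\<le>d. \<Sum>l'<s. \<Sum>k\<le>d - j. \<Sum>l<s.
        f j l' * ?F j (A k $$ (l', l)) * ?F (j + k) (B (d - j - k) $$ (l, c)))"
      by (rule sum.cong[OF refl], rule sum.swap)
    also have "\<dots> = (\<Sum>j\<le>d. \<Sum>l'<s. f j l' * ?F j (\<Sum>k\<le>d - j. \<Sum>l<s.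
        A k $$ (l', l) * (frob_inv ^^ k) (B (d - j - k) $$ (l, c))))"
      by (simp add: frob_inv_funpow_hom funpow_add sum_distrib_left mult.assoc)
    also have "\<dots> = srow_mult s (sprod s s s A B) f d c"
      using that by (simp add: srow_mult_def sprod_def)
    finally show ?thesis .
  qed
  then show ?thesis
    by (auto simp: fun_eq_iff srow_mult_def)
qed

lemma srow_shift_sigma:
  "srow_sigma (srow_shift s A a f) = srow_shift s A (frob_inv a) (srow_sigma f)"
  by (simp add: srow_shift_def srow_sigma_diff srow_sigma_smult srow_mult_sigma)

lemma srow_shift_funpow_sigma:
  "srow_sigma ((srow_shift s A a ^^ n) f) = (srow_shift s A (frob_inv a) ^^ n) (srow_sigma f)"
  by (induction n) (simp_all add: srow_shift_sigma)

lemma srow_shift_commute: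
  "srow_shift s A a (srow_shift s A b f) = srow_shift s A b (srow_shift s A a f)"
  by (simp add: srow_shift_def srow_mult.diff srow_mult.scale algebra_simps fun_eq_iff)

lemma srow_shift_funpow_commute:
  "srow_shift s A a ((srow_shift s A b ^^ n) f) = (srow_shift s A b ^^ n) (srow_shift s A a f)"
  by (induction n) (simp_all add: srow_shift_commute[of s A a b])

lemma srow_shift_diff: "srow_shift s A a (f - g) = srow_shift s A a f - srow_shift s A a g"
  by (simp add: srow_shift_def srow_mult.diff srow.scale_right_diff_distrib)

lemma srow_shift_funpow_diff:
  "(srow_shift s A a ^^ n) (f - g) = (srow_shift s A a ^^ n) f - (srow_shift s A a ^^ n) g"
  by (induction n) (simp_all only: funpow.simps comp_apply id_apply srow_shift_diff)

lemma srow_shift_const: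
  assumes "is_smat s s A" and "c < s"
  shows "srow_shift s A a f 0 c = (\<Sum>l<s. f 0 l * (A 0 - a \<cdot>\<^sub>m 1\<^sub>m s) $$ (l, c))"
proof -
  have "(\<Sum>l<s. f 0 l * (A 0 - a \<cdot>\<^sub>m 1\<^sub>m s) $$ (l, c))
      = (\<Sum>l<s. f 0 l * A 0 $$ (l, c) - (if l = c then a * f 0 l else 0))"
    using assms by (intro sum.cong) (auto simp: is_smat_def algebra_simps)
  then show ?thesis
    using assms(2) by (simp add: srow_shift_def srow_mult_const sum_subtractf)
qed

lemma srow_shift_funpow_const:
  assumes "is_smat s s A" and "c < s"
  shows "(srow_shift s A a ^^ n) f 0 c = (\<Sum>l<s. f 0 l * ((A 0 - a \<cdot>\<^sub>m 1\<^sub>m s) ^\<^sub>m n) $$ (l, c))"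
  using assms(2)
proof (induction n arbitrary: c)
  case 0
  then show ?case
    by (simp add: sum.delta' if_distrib[of "(*) _"] cong: if_cong)
next
  case (Suc n)
  define B where "B = A 0 - a \<cdot>\<^sub>m 1\<^sub>m s"
  have "A 0 \<in> carrier_mat s s"
    using assms(1) by (simp add: is_smat_def)
  then have B: "B \<in> carrier_mat s s"
    unfolding B_def by (intro minus_carrier_mat) simp
  have "(srow_shift s A a ^^ Suc n) f 0 c = (\<Sum>l<s. (srow_shift s A a ^^ n) f 0 l * B $$ (l, c))"
    using srow_shift_const[OF assms(1) Suc.prems] by (simp add: B_def)
  also have "\<dots> = (\<Sum>l<s. (\<Sum>m<s. f 0 m * (B ^\<^sub>m n) $$ (m, l)) * B $$ (l, c))"
    by (intro sum.cong refl) (simp add: Suc.IH B_def)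
  also have "\<dots> = (\<Sum>m<s. f 0 m * (B ^\<^sub>m n * B) $$ (m, c))"
    using B Suc.prems by (intro sum_vec_mult_mat) simp_all
  finally show ?case
    by (simp add: B_def)
qed

lemma srow_shift_funpow_eq_sigma:
  assumes "is_smat s s A" and "(sdel A - a \<cdot>\<^sub>m 1\<^sub>m s) ^\<^sub>m n = 0\<^sub>m s s" and "is_srow s f"
  obtains g where "is_srow s g" and "(srow_shift s A a ^^ n) f = srow_sigma g"
proof (rule srow_sigma_surj)
  show "is_srow s ((srow_shift s A a ^^ n) f)"
    using assms by (simp add: is_srow_srow_shift_funpow)
  show "(srow_shift s A a ^^ n) f 0 = 0"
  proof
    fix c
    show "(srow_shift s A a ^^ n) f 0 c = 0 c"
    proof (cases "c < s")
      case True
      then show ?thesis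
        using assms(2) by (simp add: srow_shift_funpow_const[OF assms(1) True] sdel_def sum.neutral)
    next
      case False
      then show ?thesis
        using \<open>is_srow s ((srow_shift s A a ^^ n) f)\<close> by (simp add: is_srow_def)
    qed
  qed
qed

definition smat_of_srow :: "nat \<Rightarrow> 'f::{finite,field} srow \<Rightarrow> 'f smat" where
  "smat_of_srow s f = (\<lambda>d. mat 1 s (\<lambda>(_, c). f d c))"

lemma is_smat_smat_of_srow: "is_srow s f \<Longrightarrow> is_smat 1 s (smat_of_srow s f)"
  by (fastforce simp: is_srow_def is_smat_def smat_of_srow_def fun_eq_iff intro!: eq_matI)

lemma sprod_smat_of_srow: "sprod 1 s s (smat_of_srow s f) A = smat_of_srow s (srow_mult s A f)"
  by (auto simp: fun_eq_iff sprod_def smat_of_srow_def srow_mult_def intro!: eq_matI sum.cong)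

lemma smat_of_srow_inject:
  assumes "is_srow s f" and "is_srow s g" and "smat_of_srow s f = smat_of_srow s g"
  shows "f = g"
proof -
  have "f d c = g d c" for d c
  proof (cases "c < s")
    case True
    then show ?thesis
      using arg_cong[OF assms(3), of "\<lambda>F. F d $$ (0, c)"] by (simp add: smat_of_srow_def)
  qed (use assms(1,2) in \<open>simp add: is_srow_def\<close>)
  then show ?thesis
    by (simp add: fun_eq_iff)
qed

lemma srow_mult_injective:
  assumes "\<forall>x y. is_smat 1 s x \<longrightarrow> is_smat 1 s y \<longrightarrow> sprod 1 s s x A = sprod 1 s s y A \<longrightarrow> x = y"
    and "is_srow s f" and "srow_mult s A f = 0"
  shows "f = 0"
proof (rule smat_of_srow_inject)
  show "is_srow s 0"
    by (simp add: is_srow_def)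
  have "srow_mult s A 0 = 0"
    by (simp add: srow_mult_def fun_eq_iff)
  then have "sprod 1 s s (smat_of_srow s f) A = sprod 1 s s (smat_of_srow s 0) A"
    by (simp only: sprod_smat_of_srow assms(3))
  then show "smat_of_srow s f = smat_of_srow s 0"
    using assms(1) is_smat_smat_of_srow[OF assms(2)] is_smat_smat_of_srow[OF \<open>is_srow s 0\<close>] by blast
qed fact

definition srow_image :: "nat \<Rightarrow> 'f::{finite,field} smat \<Rightarrow> 'f srow set" where
  "srow_image s A = srow_mult s A ` {f. is_srow s f}"

lemma subspace_srow_image: "srow.subspace (srow_image s A)"
  unfolding srow_image_def by (rule srow_mult.subspace_image[OF subspace_srows])

lemma srow_sigma_srow_image: "x \<in> srow_image s A \<Longrightarrow> srow_sigma x \<in> srow_image s A"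
  by (auto simp: srow_image_def srow_mult_sigma[symmetric] is_srow_sigma)

lemma srows_bounded_degree_dependent:
  fixes w :: "nat \<Rightarrow> 'f::{finite,field} srow"
  assumes "\<And>k d c. k \<le> m * s \<Longrightarrow> m \<le> d \<or> s \<le> c \<Longrightarrow> w k d c = 0"
  obtains a where "\<exists>k\<le>m * s. a k \<noteq> 0" and "(\<Sum>k\<le>m * s. srow_smult (a k) (w k)) = 0"
proof -
  obtain a where a: "\<exists>k\<le>m * s. a k \<noteq> 0"
    and rel: "\<And>i. i < m * s \<Longrightarrow> (\<Sum>k\<le>m * s. a k * w k (i div s) (i mod s)) = 0"
    using exists_nontrivial_linear_relation[of "m * s" "\<lambda>k i. w k (i div s) (i mod s)"] by blast
  have "(\<Sum>k\<le>m * s. srow_smult (a k) (w k)) d c = 0" for d c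
  proof (cases "m \<le> d \<or> s \<le> c")
    case True
    then show ?thesis
      using assms by (simp add: sum_fun_apply)
  next
    case False
    then have "d * s + c < Suc d * s"
      by simp
    also have "\<dots> \<le> m * s"
      using False by (intro mult_le_mono1) simp
    finally have "d * s + c < m * s" .
    then show ?thesis
      using rel[of "d * s + c"] False by (simp add: sum_fun_apply)
  qed
  then show ?thesis
    using that a by (simp add: fun_eq_iff)
qed

definition srow_unit :: "nat \<Rightarrow> nat \<Rightarrow> 'f::{finite,field} srow" where
  "srow_unit s k = (\<lambda>d c. if d = k div s \<and> c = k mod s then 1 else 0)"

lemma is_srow_srow_unit:
  assumes "0 < s"
  shows "is_srow s (srow_unit s k)"
proof -
  have "k mod s < s"
    using assms by simp
  then show ?thesis
    by (auto simp: is_srow_def srow_unit_def intro!: exI[of _ "Suc (k div s)"])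
qed

lemma sum_srow_unit_apply:
  assumes "0 < s" and "k < n"
  shows "(\<Sum>j<n. srow_smult (a j) (srow_unit s j)) (k div s) (k mod s) = a k"
proof -
  have "(k div s = j div s \<and> k mod s = j mod s) \<longleftrightarrow> k = j" for j
    by (metis div_mult_mod_eq)
  then show ?thesis
    using assms(2) by (simp add: sum_fun_apply srow_unit_def if_distrib[of "(*) _"] sum.delta sum.delta'
        cong: if_cong)
qed

lemma srow_mult_srow_unit_eq_0_above:
  assumes "k < L * s" and "\<forall>i\<ge>e. A i = 0\<^sub>m s s" and "L + e \<le> d"
  shows "srow_mult s A (srow_unit s k) d c = 0"
proof (rule srow_mult_eq_0_above[OF _ assms(2,3)])
  show "\<forall>d\<ge>L. \<forall>c. srow_unit s k d c = 0"
    using less_mult_imp_div_less[OF assms(1)] by (simp add: srow_unit_def)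
qed

text \<open>With \<open>e\<close> bounding the degree of \<open>A\<close> and \<open>L\<close> that of the rows \<open>c\<^sub>l\<close>, the \<open>L s\<close> unit rows
  times \<open>A\<close> together with the \<open>e s + 1\<close> rows \<open>c\<^sub>l\<close> are \<open>(L + e) s + 1\<close> rows of degree \<open>< L + e\<close>.\<close>
lemma srow_mult_units_and_srows_dependent:
  assumes "\<forall>i\<ge>e. A i = 0\<^sub>m s s"
    and "\<And>l d c. l \<le> e * s \<Longrightarrow> L \<le> d \<Longrightarrow> cc l d c = 0" and "\<And>l d c. s \<le> c \<Longrightarrow> cc l d c = 0"
  obtains a where "\<exists>k\<le>(L + e) * s. a k \<noteq> 0"
    and "srow_mult s A (\<Sum>k<L * s. srow_smult (a k) (srow_unit s k))
      + (\<Sum>l\<le>e * s. srow_smult (a (l + L * s)) (cc l)) = 0"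
proof -
  define w where "w k = (if k < L * s then srow_mult s A (srow_unit s k) else cc (k - L * s))" for k
  have "w k d c = 0" if "k \<le> (L + e) * s" and "L + e \<le> d \<or> s \<le> c" for k d c
  proof (cases "k < L * s")
    case True
    show ?thesis
      using that(2)
    proof
      assume "L + e \<le> d"
      then show ?thesis
        using srow_mult_srow_unit_eq_0_above[OF True assms(1)] by (simp add: w_def True)
    qed (simp add: w_def True srow_mult_def)
  next
    case False
    then have "k - L * s \<le> e * s"
      using that(1) by (simp add: algebra_simps)
    then show ?thesis
      using False that(2) assms(2,3) by (auto simp: w_def)
  qed
  then obtain a where a: "\<exists>k\<le>(L + e) * s. a k \<noteq> 0"
    and "(\<Sum>k\<le>(L + e) * s. srow_smult (a k) (w k)) = 0"
    using srows_bounded_degree_dependent[of "L + e" s w] by blast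
  then have "(\<Sum>k\<le>L * s + e * s. srow_smult (a k) (w k)) = 0"
    by (simp add: distrib_right)
  then show ?thesis
    using that[OF a] by (simp add: sum_atMost_add_split w_def srow_mult.sum srow_mult.scale)
qed

lemma srows_dependent_modulo_srow_image:
  assumes "0 < s" and "\<forall>i\<ge>e. A i = 0\<^sub>m s s" and rows: "\<And>l. is_srow s (cc l)"
  obtains a x where "is_srow s x" and "(\<exists>l\<le>e * s. a l \<noteq> 0) \<or> x \<noteq> 0"
    and "(\<Sum>l\<le>e * s. srow_smult (a l) (cc l)) = srow_mult s A (- x)"
proof -
  obtain N where N: "\<And>l d c. N l \<le> d \<Longrightarrow> cc l d c = 0"
    using rows unfolding is_srow_def by metis
  define L where "L = (\<Sum>l\<le>e * s. N l)"
  have "cc l d c = 0" if "l \<le> e * s" and "L \<le> d" for l d c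
    using that member_le_sum[of l "{..e * s}" N] N[of l d c] by (simp add: L_def)
  moreover have "cc l d c = 0" if "s \<le> c" for l d c
    using that rows[of l] by (simp add: is_srow_def)
  ultimately obtain a where a: "\<exists>k\<le>(L + e) * s. a k \<noteq> 0"
    and rel: "srow_mult s A (\<Sum>k<L * s. srow_smult (a k) (srow_unit s k))
      + (\<Sum>l\<le>e * s. srow_smult (a (l + L * s)) (cc l)) = 0"
    using srow_mult_units_and_srows_dependent[OF assms(2)] by blast
  define x where "x = (\<Sum>k<L * s. srow_smult (a k) (srow_unit s k))"
  have x: "is_srow s x"
    unfolding x_def using assms(1)
    by (intro srow.subspace_sum[OF subspace_srows, simplified]
        srow.subspace_scale[OF subspace_srows, simplified] is_srow_srow_unit)
  have eq: "(\<Sum>l\<le>e * s. srow_smult (a (l + L * s)) (cc l)) = srow_mult s A (- x)"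
    using rel by (simp add: x_def srow_mult.neg eq_neg_iff_add_eq_0 add.commute)
  have "(\<exists>l\<le>e * s. a (l + L * s) \<noteq> 0) \<or> x \<noteq> 0"
  proof (rule ccontr)
    assume "\<not> ?thesis"
    then have high: "\<And>l. l \<le> e * s \<Longrightarrow> a (l + L * s) = 0" and "x = 0"
      by auto
    have "a k = 0" if "k \<le> (L + e) * s" for k
    proof (cases "k < L * s")
      case True
      then show ?thesis
        using sum_srow_unit_apply[OF assms(1) True, of a] \<open>x = 0\<close> by (simp add: x_def)
    next
      case False
      then have "k = (k - L * s) + L * s" and "k - L * s \<le> e * s"
        using that by (simp_all add: algebra_simps)
      then show ?thesis
        using high by metis
    qed
    with a show False
      by blast
  qed
  then show ?thesis
    using that[of x "\<lambda>l. a (l + L * s)"] x eq by blast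
qed

section \<open>Injective morphisms\<close>

locale injective_motive_morphism =
  fixes s :: nat and \<theta> \<phi> \<rho> :: "'f::{finite,field} smat"
  assumes is_smat_\<theta>: "is_smat s s \<theta>" and is_smat_\<phi>: "is_smat s s \<phi>" and is_smat_\<rho>: "is_smat s s \<rho>"
    and nilpotent_\<theta>: "(sdel \<theta> - Tk \<cdot>\<^sub>m 1\<^sub>m s) ^\<^sub>m s = 0\<^sub>m s s"
    and intertwining: "sprod s s s \<theta> \<phi> = sprod s s s \<phi> \<rho>"
    and nilpotent_\<rho>: "(sdel \<rho> - Tk \<cdot>\<^sub>m 1\<^sub>m s) ^\<^sub>m s = 0\<^sub>m s s"
    and injective: "\<And>f. is_srow s f \<Longrightarrow> srow_mult s \<phi> f = 0 \<Longrightarrow> f = 0"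
begin

abbreviation M\<phi> :: "'f srow set" where
  "M\<phi> \<equiv> srow_image s \<phi>"

lemma srow_mult_\<rho>_srow_mult_\<phi>:
  "srow_mult s \<rho> (srow_mult s \<phi> h) = srow_mult s \<phi> (srow_mult s \<theta> h)"
  by (simp only: srow_mult_sprod intertwining)

lemma srow_shift_funpow_srow_mult:
  "(srow_shift s \<rho> a ^^ n) (srow_mult s \<phi> h) = srow_mult s \<phi> ((srow_shift s \<theta> a ^^ n) h)"
proof (induction n)
  case (Suc n)
  have "srow_shift s \<rho> a (srow_mult s \<phi> g) = srow_mult s \<phi> (srow_shift s \<theta> a g)" for g
    by (simp only: srow_shift_def srow_mult_\<rho>_srow_mult_\<phi> srow_mult.diff srow_mult_smult)
  then show ?case
    using Suc by simp
qed simp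

lemma srow_mult_\<rho>_M\<phi>: "x \<in> M\<phi> \<Longrightarrow> srow_mult s \<rho> x \<in> M\<phi>"
  by (auto simp: srow_image_def srow_mult_\<rho>_srow_mult_\<phi> is_srow_srow_mult is_smat_\<theta>)

lemma srow_shift_funpow_M\<phi>: "x \<in> M\<phi> \<Longrightarrow> (srow_shift s \<rho> a ^^ n) x \<in> M\<phi>"
  by (auto simp: srow_image_def srow_shift_funpow_srow_mult is_srow_srow_shift_funpow is_smat_\<theta>)

lemma srow_shift_M\<phi>: "x \<in> M\<phi> \<Longrightarrow> srow_shift s \<rho> a x \<in> M\<phi>"
  using srow_shift_funpow_M\<phi>[where n = 1] by simp

lemma srow_shift_funpow_modulo_M\<phi>:
  assumes "srow_shift s \<rho> m c \<in> M\<phi>"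
  shows "(srow_shift s \<rho> a ^^ n) c - srow_smult ((m - a) ^ n) c \<in> M\<phi>"
proof -
  have "srow_shift s \<rho> b = (\<lambda>x. srow_mult s \<rho> x - srow_smult b x)" for b
    by (rule ext) (rule srow_shift_def)
  then show ?thesis
    using srow.shift_funpow_modulo_subspace[OF subspace_srow_image linear_srow_mult srow_mult_\<rho>_M\<phi>]
      assms by simp
qed

text \<open>Since \<open>frob_inv (T\<^sup>q) = T\<close>, \<open>\<sigma>\<close> intertwines \<open>\<rho> - T\<^sup>q\<close> with \<open>\<rho> - T\<close>; and \<open>(\<theta> - T)\<^sup>s\<close>,
  whose constant term vanishes, maps every row to a row \<open>\<sigma> z\<close>.\<close>
lemma srow_shift_funpow_M\<phi>_of_sigma:
  assumes "is_srow s d" and "srow_sigma d \<in> M\<phi>"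
  shows "(srow_shift s \<rho> (Tk ^ CARD('f)) ^^ s) d \<in> M\<phi>"
proof -
  obtain y where y: "is_srow s y" "srow_sigma d = srow_mult s \<phi> y"
    using assms(2) by (auto simp: srow_image_def)
  obtain z where z: "is_srow s z" "(srow_shift s \<theta> Tk ^^ s) y = srow_sigma z"
    using srow_shift_funpow_eq_sigma[OF is_smat_\<theta> nilpotent_\<theta> y(1)] .
  have "srow_sigma ((srow_shift s \<rho> (Tk ^ CARD('f)) ^^ s) d) = (srow_shift s \<rho> Tk ^^ s) (srow_sigma d)"
    by (simp add: srow_shift_funpow_sigma)
  also have "\<dots> = srow_sigma (srow_mult s \<phi> z)"
    by (simp add: y(2) z(2) srow_shift_funpow_srow_mult srow_mult_sigma)
  finally show ?thesis
    using z(1) by (auto simp: srow_image_def)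
qed

lemma exists_row_annihilated_at_0:
  assumes "det (sdel \<phi>) = 0"
  obtains v where "is_srow s v" and "v 0 \<noteq> 0"
    and "srow_mult s \<phi> v 0 = 0" and "srow_shift s \<theta> Tk v 0 = 0"
proof -
  obtain u where u: "\<exists>l<s. u l \<noteq> 0" "\<And>c. c < s \<Longrightarrow> (\<Sum>l<s. u l * \<phi> 0 $$ (l, c)) = 0"
    using det_eq_0_left_kernel[of "\<phi> 0" s] is_smat_\<phi> assms by (auto simp: is_smat_def sdel_def)
  define u' :: "'f srow" where "u' = (\<lambda>d c. if d = 0 \<and> c < s then u c else 0)"
  have "is_srow s u'"
    by (auto simp: is_srow_def u'_def intro!: exI[of _ 1])
  define G where "G k = (srow_shift s \<theta> Tk ^^ k) u'" for k
  have G: "is_srow s (G k)" for k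
    unfolding G_def by (intro is_srow_srow_shift_funpow is_smat_\<theta> \<open>is_srow s u'\<close>)
  have G_\<phi>: "srow_mult s \<phi> (G k) 0 = 0" for k
  proof (induction k)
    case 0
    show ?case
      using u(2) by (simp add: G_def u'_def srow_mult_const fun_eq_iff)
  next
    case (Suc k)
    have "srow_mult s \<phi> (G (Suc k)) = srow_shift s \<rho> Tk (srow_mult s \<phi> (G k))"
      using srow_shift_funpow_srow_mult[of 1] by (simp add: G_def)
    moreover have "srow_shift s \<rho> Tk g 0 = 0" if "g 0 = 0" for g
      using that by (simp add: fun_eq_iff srow_shift_def srow_mult_const)
    ultimately show ?case
      using Suc by (simp only:)
  qed
  have "G 0 0 \<noteq> 0"
    using u(1) by (auto simp: G_def u'_def fun_eq_iff)
  moreover have "G s 0 = 0"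
    using srow_shift_funpow_eq_sigma[OF is_smat_\<theta> nilpotent_\<theta> \<open>is_srow s u'\<close>]
    by (metis G_def srow_sigma_0)
  ultimately obtain j where "G j 0 \<noteq> 0" and "G (Suc j) 0 = 0"
    using ex_least_nat_less[of "\<lambda>k. G k 0 = 0" s] by blast
  moreover have "G (Suc j) = srow_shift s \<theta> Tk (G j)"
    by (simp add: G_def)
  ultimately show ?thesis
    using that[OF G[of j] _ G_\<phi>[of j]] by simp
qed

lemma exists_first_eigenvector:
  assumes "det (sdel \<phi>) = 0"
  obtains w where "is_srow s w" and "w \<notin> M\<phi>" and "srow_shift s \<rho> (Tk ^ CARD('f)) w \<in> M\<phi>"
proof -
  obtain v where v: "is_srow s v" "v 0 \<noteq> 0" "srow_mult s \<phi> v 0 = 0" "srow_shift s \<theta> Tk v 0 = 0"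
    using exists_row_annihilated_at_0[OF assms] .
  obtain w where w: "is_srow s w" "srow_mult s \<phi> v = srow_sigma w"
    using srow_sigma_surj[OF is_srow_srow_mult[OF v(1) is_smat_\<phi>] v(3)] .
  obtain z where z: "is_srow s z" "srow_shift s \<theta> Tk v = srow_sigma z"
    using srow_sigma_surj[OF is_srow_srow_shift[OF v(1) is_smat_\<theta>] v(4)] .
  have "w \<notin> M\<phi>"
  proof
    assume "w \<in> M\<phi>"
    then obtain y where y: "is_srow s y" "w = srow_mult s \<phi> y"
      by (auto simp: srow_image_def)
    have "srow_mult s \<phi> (v - srow_sigma y) = 0"
      by (simp add: srow_mult.diff w(2) y(2) srow_mult_sigma)
    then have "v = srow_sigma y"
      using injective srow.subspace_diff[OF subspace_srows] v(1) is_srow_sigma[OF y(1)] by fastforce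
    with v(2) show False
      by simp
  qed
  moreover have "srow_sigma (srow_shift s \<rho> (Tk ^ CARD('f)) w) = srow_sigma (srow_mult s \<phi> z)"
    using srow_shift_funpow_srow_mult[of 1 Tk v]
    by (simp add: srow_shift_sigma w(2)[symmetric] z(2) srow_mult_sigma)
  ultimately show ?thesis
    using that w(1) z(1) by (auto simp: srow_image_def)
qed

lemma srow_shift_funpow_notin_M\<phi>:
  assumes "m \<noteq> a" and "c \<notin> M\<phi>" and "srow_shift s \<rho> m c \<in> M\<phi>"
  shows "(srow_shift s \<rho> a ^^ n) c \<notin> M\<phi>"
proof
  assume "(srow_shift s \<rho> a ^^ n) c \<in> M\<phi>"
  then have "(srow_shift s \<rho> a ^^ n) c - ((srow_shift s \<rho> a ^^ n) c - srow_smult ((m - a) ^ n) c) \<in> M\<phi>"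
    using srow_shift_funpow_modulo_M\<phi>[OF assms(3)] by (rule srow.subspace_diff[OF subspace_srow_image])
  then have "srow_smult ((m - a) ^ n) c \<in> M\<phi>"
    by simp
  then have "srow_smult (inverse ((m - a) ^ n)) (srow_smult ((m - a) ^ n) c) \<in> M\<phi>"
    by (rule srow.subspace_scale[OF subspace_srow_image])
  with assms(1,2) show False
    by simp
qed

lemma exists_sigma_modulo_M\<phi>:
  assumes "m \<noteq> Tk" and "is_srow s c" and "srow_shift s \<rho> m c \<in> M\<phi>"
  obtains c' where "is_srow s c'" and "c - srow_sigma c' \<in> M\<phi>"
proof -
  define r where "r = (m - Tk) ^ s"
  have "r \<noteq> 0"
    using assms(1) by (simp add: r_def)
  obtain e where e: "is_srow s e" "(srow_shift s \<rho> Tk ^^ s) c = srow_sigma e"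
    using srow_shift_funpow_eq_sigma[OF is_smat_\<rho> nilpotent_\<rho> assms(2)] .
  have "srow_sigma e - srow_smult r c \<in> M\<phi>"
    using srow_shift_funpow_modulo_M\<phi>[OF assms(3), where a = Tk and n = s] by (simp add: r_def e(2))
  then have "srow_smult (- inverse r) (srow_sigma e - srow_smult r c) \<in> M\<phi>"
    by (rule srow.subspace_scale[OF subspace_srow_image])
  moreover have "srow_smult (- inverse r) (srow_sigma e - srow_smult r c)
      = c - srow_sigma (srow_smult (inverse r ^ CARD('f)) e)"
    using \<open>r \<noteq> 0\<close>
    by (simp only: srow_sigma_smult frob_inv_power_card) (simp add: fun_eq_iff field_simps)
  ultimately show ?thesis
    using that srow.subspace_scale[OF subspace_srows] e(1) by fastforce
qed

lemma eigenvector_step: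
  assumes "m \<noteq> Tk" and "is_srow s c" and "c \<notin> M\<phi>" and "srow_shift s \<rho> m c \<in> M\<phi>"
  obtains c' where "is_srow s c'" and "c' \<notin> M\<phi>" and "srow_shift s \<rho> (m ^ CARD('f)) c' \<in> M\<phi>"
proof -
  obtain b where b: "is_srow s b" "c - srow_sigma b \<in> M\<phi>"
    using exists_sigma_modulo_M\<phi>[OF assms(1,2,4)] .
  define c' where "c' = (srow_shift s \<rho> (Tk ^ CARD('f)) ^^ s) b"
  have c'_row: "is_srow s c'"
    unfolding c'_def by (rule is_srow_srow_shift_funpow[OF b(1) is_smat_\<rho>])
  have c'_eigen: "srow_shift s \<rho> (m ^ CARD('f)) c' \<in> M\<phi>"
  proof -
    have "srow_sigma (srow_shift s \<rho> (m ^ CARD('f)) b)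
        = srow_shift s \<rho> m c - srow_shift s \<rho> m (c - srow_sigma b)"
      by (simp add: srow_shift_sigma srow_shift_diff)
    also have "\<dots> \<in> M\<phi>"
      by (rule srow.subspace_diff[OF subspace_srow_image assms(4) srow_shift_M\<phi>[OF b(2)]])
    finally have "(srow_shift s \<rho> (Tk ^ CARD('f)) ^^ s) (srow_shift s \<rho> (m ^ CARD('f)) b) \<in> M\<phi>"
      by (intro srow_shift_funpow_M\<phi>_of_sigma is_srow_srow_shift[OF b(1) is_smat_\<rho>])
    then show ?thesis
      by (simp add: c'_def srow_shift_funpow_commute)
  qed
  have c'_notin: "c' \<notin> M\<phi>"
  proof
    assume "c' \<in> M\<phi>"
    have "(srow_shift s \<rho> Tk ^^ s) c = srow_sigma c' + (srow_shift s \<rho> Tk ^^ s) (c - srow_sigma b)"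
      by (simp add: c'_def srow_shift_funpow_sigma srow_shift_funpow_diff)
    also have "\<dots> \<in> M\<phi>"
      using srow_sigma_srow_image[OF \<open>c' \<in> M\<phi>\<close>] srow_shift_funpow_M\<phi>[OF b(2)]
      by (rule srow.subspace_add[OF subspace_srow_image])
    finally show False
      using srow_shift_funpow_notin_M\<phi>[OF assms(1,3,4)] by blast
  qed
  show ?thesis
    by (rule that[OF c'_row c'_notin c'_eigen])
qed

lemma exists_eigenvector:
  assumes "det (sdel \<phi>) = 0"
  obtains c where "is_srow s c" and "c \<notin> M\<phi>" and "srow_shift s \<rho> (Tk ^ CARD('f) ^ Suc n) c \<in> M\<phi>"
proof (induction n arbitrary: thesis)
  case 0
  obtain w where "is_srow s w" and "w \<notin> M\<phi>" and "srow_shift s \<rho> (Tk ^ CARD('f)) w \<in> M\<phi>"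
    using exists_first_eigenvector[OF assms] .
  then show ?case
    by (intro 0) simp_all
next
  case (Suc n)
  obtain c where "is_srow s c" and "c \<notin> M\<phi>" and "srow_shift s \<rho> (Tk ^ CARD('f) ^ Suc n) c \<in> M\<phi>"
    using Suc.IH .
  then obtain c' where c': "is_srow s c'" "c' \<notin> M\<phi>"
    and "srow_shift s \<rho> ((Tk ^ CARD('f) ^ Suc n) ^ CARD('f)) c' \<in> M\<phi>"
    using eigenvector_step[OF Tk_power_card_power_neq_Tk] by blast
  moreover have "(Tk ^ CARD('f) ^ Suc n) ^ CARD('f) = (Tk :: 'f kbar) ^ CARD('f) ^ Suc (Suc n)"
    by (simp only: power_mult[symmetric] power_Suc2[symmetric])
  ultimately show ?case
    using Suc.prems by simp
qed

lemma srows_dependent_modulo_M\<phi>: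
  assumes "0 < s" and "\<forall>i\<ge>e. \<phi> i = 0\<^sub>m s s" and "\<And>l. is_srow s (cc l)"
  obtains a where "\<exists>l\<le>e * s. a l \<noteq> 0" and "(\<Sum>l\<le>e * s. srow_smult (a l) (cc l)) \<in> M\<phi>"
proof -
  obtain a x where x: "is_srow s x" and nontrivial: "(\<exists>l\<le>e * s. a l \<noteq> 0) \<or> x \<noteq> 0"
    and eq: "(\<Sum>l\<le>e * s. srow_smult (a l) (cc l)) = srow_mult s \<phi> (- x)"
    using srows_dependent_modulo_srow_image[OF assms] .
  have "is_srow s (- x)"
    using srow.subspace_neg[OF subspace_srows] x by simp
  have "\<exists>l\<le>e * s. a l \<noteq> 0"
  proof (rule ccontr)
    assume "\<not> ?thesis"
    then have "srow_mult s \<phi> (- x) = 0"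
      using eq by simp
    then have "x = 0"
      using injective[OF \<open>is_srow s (- x)\<close>] by simp
    with \<open>\<not> ?thesis\<close> nontrivial show False
      by blast
  qed
  moreover have "(\<Sum>l\<le>e * s. srow_smult (a l) (cc l)) \<in> M\<phi>"
    using eq \<open>is_srow s (- x)\<close> by (simp add: srow_image_def)
  ultimately show ?thesis
    by (rule that)
qed

theorem det_sdel_\<phi>_neq_0: "det (sdel \<phi>) \<noteq> 0"
proof
  assume det: "det (sdel \<phi>) = 0"
  have "0 < s"
  proof (rule ccontr)
    assume "\<not> 0 < s"
    then have "sdel \<phi> = 1\<^sub>m 0"
      using is_smat_\<phi> by (intro eq_matI) (auto simp: is_smat_def sdel_def)
    with det show False
      by simp
  qed
  have eigen: "\<forall>n. \<exists>c. is_srow s c \<and> c \<notin> M\<phi> \<and> srow_shift s \<rho> (Tk ^ CARD('f) ^ Suc n) c \<in> M\<phi>"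
    using exists_eigenvector[OF det] by blast
  obtain cc where cc: "\<And>n. is_srow s (cc n)" "\<And>n. cc n \<notin> M\<phi>"
    "\<And>n. srow_shift s \<rho> (Tk ^ CARD('f) ^ Suc n) (cc n) \<in> M\<phi>"
    using choice[OF eigen] by blast
  obtain e where e: "\<forall>i\<ge>e. \<phi> i = 0\<^sub>m s s"
    using is_smat_\<phi> by (auto simp: is_smat_def)
  obtain a where a: "\<exists>l\<le>e * s. a l \<noteq> 0" "(\<Sum>l\<le>e * s. srow_smult (a l) (cc l)) \<in> M\<phi>"
    using srows_dependent_modulo_M\<phi>[OF \<open>0 < s\<close> e cc(1)] .
  have "\<forall>l<Suc (e * s). a l = 0"
  proof (rule srow.eigenvectors_modulo_subspace_independent
      [OF subspace_srow_image linear_srow_mult srow_mult_\<rho>_M\<phi> cc(2) _ inj_Tk_power_card_power])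
    show "srow_mult s \<rho> (cc n) - srow_smult (Tk ^ CARD('f) ^ Suc n) (cc n) \<in> M\<phi>" for n
      using cc(3)[of n] by (simp add: srow_shift_def)
    show "(\<Sum>l<Suc (e * s). srow_smult (a l) (cc l)) \<in> M\<phi>"
      using a(2) by (simp add: lessThan_Suc_atMost)
  qed
  with a(1) show False
    by auto
qed

end

theorem lemma4:
  fixes s :: nat and \<theta> \<phi> \<rho> :: "'f::{finite,field} smat"
  assumes "is_smat s s \<theta>" and "is_smat s s \<phi>" and "is_smat s s \<rho>"
    and "(sdel \<theta> - Tk \<cdot>\<^sub>m 1\<^sub>m s) ^\<^sub>m s = 0\<^sub>m s s"
    and "sprod s s s \<theta> \<phi> = sprod s s s \<phi> \<rho>"
    and "(sdel \<rho> - Tk \<cdot>\<^sub>m 1\<^sub>m s) ^\<^sub>m s = 0\<^sub>m s s"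
    and "\<forall>x y. is_smat 1 s x \<longrightarrow> is_smat 1 s y \<longrightarrow>
           sprod 1 s s x \<phi> = sprod 1 s s y \<phi> \<longrightarrow> x = y"
  shows "det (sdel \<phi>) \<noteq> 0"
proof -
  interpret injective_motive_morphism s \<theta> \<phi> \<rho>
    using assms srow_mult_injective[OF assms(7)] by unfold_locales blast+
  show ?thesis
    by (rule det_sdel_\<phi>_neq_0)
qed

end
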